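(* Let $\sigma=\{\lambda_1,\ldots,\lambda_n\}$ be a set of $n$ distinct real numbers and let $\mathcal{F}$ be a finite set of real numbers. Then for any connected graph $G$ on $n\geq 2$ vertices there exists a matrix $A\in\mathcal{S}(G)$ with the strong spectral property such that $\operatorname{spec}(A)=\sigma$ and none of the diagonal entries of $A$ lies in $\mathcal{F}$.
   Context: For a simple graph $G$ on vertex set $\{1,\ldots,n\}$, $\mathcal{S}(G)$ is the set of all $n\times n$ real symmetric matrices $A=(a_{ij})$ such that for $i\neq j$, $a_{ij}\neq 0$ if and only if $\{i,j\}$ is an edge of $G$ (diagonal entries are unrestricted). A real symmetric matrix $A$ has the strong spectral property (SSP) if the only real symmetric matrix $X$ satisfying $A\circ X=O$, $I\circ X=O$ and $AX-XA=O$ is $X=O$, where $\circ$ is the entrywise product. $\operatorname{spec}(A)$ denotes the multiset of eigenvalues of $A$. *)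

theory Defs
  imports "HOL-Analysis.Analysis" "HOL-Library.Multiset"
begin

definition simple_graph :: "('n \<Rightarrow> 'n \<Rightarrow> bool) \<Rightarrow> bool" where
  "simple_graph E \<longleftrightarrow> (\<forall>i j. E i j \<longrightarrow> E j i) \<and> (\<forall>i. \<not> E i i)"

definition connected_graph :: "('n \<Rightarrow> 'n \<Rightarrow> bool) \<Rightarrow> bool" where
  "connected_graph E \<longleftrightarrow> (\<forall>u v. E\<^sup>*\<^sup>* u v)"

definition hadamard :: "real^'n^'n \<Rightarrow> real^'n^'n \<Rightarrow> real^'n^'n" where
  "hadamard A X = (\<chi> i j. A$i$j * X$i$j)"

definition symmetric_mat :: "real^'n^'n \<Rightarrow> bool" where
  "symmetric_mat A \<longleftrightarrow> transpose A = A"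

definition S_graph :: "('n \<Rightarrow> 'n \<Rightarrow> bool) \<Rightarrow> (real^'n^'n) set" where
  "S_graph E = {A. symmetric_mat A \<and> (\<forall>i j. i \<noteq> j \<longrightarrow> (A$i$j \<noteq> 0 \<longleftrightarrow> E i j))}"

definition SSP :: "real^'n^'n \<Rightarrow> bool" where
  "SSP A \<longleftrightarrow> (\<forall>X. symmetric_mat X \<and> hadamard A X = 0 \<and> hadamard (mat 1) X = 0
                  \<and> A ** X - X ** A = 0 \<longrightarrow> X = 0)"

definition spec_is :: "real^'n^'n \<Rightarrow> real multiset \<Rightarrow> bool" where
  "spec_is A M \<longleftrightarrow> (\<forall>x. det (x *\<^sub>R mat 1 - A) = (\<Prod>\<mu>\<in>#M. x - \<mu>))"

end

(*
  Write sigma = {lam_1, ..., lam_n} and look for A = diag d + t W, where W has the pattern of G,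
  W_ij = sqrt (|lam_i - lam_j| * 2^(rho_i + rho_j)) on edges, for an injective rho : V -> nat.
  For small t > 0, Brouwer's fixed point theorem yields d close to lam such that every lam_k is a
  root of det (x I - A); as the lam_k are distinct, spec A = sigma. The diagonal entries of A are
  well separated and t is small, so A has the SSP. Second-order perturbation theory gives
  d_i - lam_i = t^2 c_i + O(t^3 + t^2 |d - lam|) with
  c_i = sum_j W_ij^2 / (lam_j - lam_i) = 2^rho_i * sum_{j ~ i} (+-2^rho_j),
  which is nonzero because every vertex of a connected graph with n >= 2 has a neighbour.
  Hence d_i differs from lam_i while being arbitrarily close to it, so d_i avoids the finite set F.
*)

theory Submission
  imports Defs "HOL-Computational_Algebra.Polynomial"
begin

section \<open>Characteristic polynomial\<close>

definition charpoly :: "real^'n^'n \<Rightarrow> real poly" where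
  "charpoly A = (\<Sum>p | p permutes (UNIV::'n set). of_int (sign p) *
      (\<Prod>i\<in>UNIV. [:- A$i$(p i), if p i = i then 1 else 0:]))"

lemma poly_charpoly: "poly (charpoly A) x = det (x *\<^sub>R mat 1 - A)"
  unfolding charpoly_def det_def by (auto simp: poly_sum poly_prod mat_def intro!: sum.cong prod.cong)

lemma degree_prod_linear_le_card_fixpoints:
  fixes a :: "'n::finite \<Rightarrow> real"
  shows "degree (\<Prod>i\<in>UNIV. [:a i, if p i = i then 1 else 0:]) \<le> card {i. p i = i}"
proof -
  have "degree (\<Prod>i\<in>UNIV. [:a i, if p i = i then 1 else 0:])
      \<le> (\<Sum>i\<in>UNIV. degree [:a i, if p i = i then 1 else (0::real):])"
    by (rule order.trans[OF degree_prod_sum_le]) auto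
  also have "\<dots> \<le> (\<Sum>i\<in>UNIV. if p i = i then 1 else 0)"
    by (intro sum_mono) auto
  also have "\<dots> = card {i. p i = i}"
    by (simp add: sum.If_cases)
  finally show ?thesis .
qed

lemma degree_charpoly_le: "degree (charpoly (A::real^'n^'n)) \<le> CARD('n)"
  unfolding charpoly_def
proof (intro degree_sum_le)
  fix p :: "'n \<Rightarrow> 'n"
  have "card {i. p i = i} \<le> CARD('n)"
    by (rule card_mono[OF finite subset_UNIV])
  with degree_prod_linear_le_card_fixpoints[where p=p and a="\<lambda>i. - A$i$(p i)"]
  show "degree (of_int (sign p) * (\<Prod>i\<in>UNIV. [:- A$i$(p i), if p i = i then 1 else 0:])) \<le> CARD('n)"
    by (metis (no_types, lifting) degree_mult_le degree_of_int add_0 order.trans)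
qed simp

lemma coeff_charpoly_card: "coeff (charpoly (A::real^'n^'n)) CARD('n) = 1"
proof -
  have "coeff (charpoly A) CARD('n) = (\<Sum>p | p permutes (UNIV::'n set). of_int (sign p) *
      coeff (\<Prod>i\<in>UNIV. [:- A$i$(p i), if p i = i then 1 else 0:]) CARD('n))"
    unfolding charpoly_def coeff_sum by (simp add: of_int_poly)
  also have "\<dots> = (\<Sum>p \<in> {id}. of_int (sign p) *
      coeff (\<Prod>i\<in>UNIV. [:- A$i$(p i), if p i = i then 1 else 0:]) CARD('n))"
  proof -
    have "coeff (\<Prod>i\<in>UNIV. [:- A$i$(p i), if p i = i then 1 else 0:]) CARD('n) = 0"
      if "p \<noteq> id" for p :: "'n \<Rightarrow> 'n"
    proof -
      from that obtain i where "p i \<noteq> i" by (auto simp: fun_eq_iff)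
      then have "card {i. p i = i} < CARD('n)"
        by (intro psubset_card_mono) auto
      with degree_prod_linear_le_card_fixpoints[where p=p and a="\<lambda>i. - A$i$(p i)"]
      show ?thesis by (simp add: coeff_eq_0)
    qed
    then show ?thesis
      by (intro sum.mono_neutral_right) (auto simp: finite_permutations permutes_id)
  qed
  also have "\<dots> = coeff (\<Prod>i\<in>(UNIV::'n set). [:- A$i$i, 1:]) CARD('n)"
    by (simp add: sign_id)
  also have "\<dots> = 1"
  proof -
    have "degree (\<Prod>i\<in>(UNIV::'n set). [:- A$i$i, 1:]) = CARD('n)"
      by (subst degree_prod_eq_sum_degree) auto
    moreover have "lead_coeff (\<Prod>i\<in>(UNIV::'n set). [:- A$i$i, 1:]) = 1"
      by (simp add: lead_coeff_prod)
    ultimately show ?thesis by simp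
  qed
  finally show ?thesis .
qed

lemma char_det_eq_prod_if_roots:
  fixes A :: "real^'n^'n" and lam :: "'n \<Rightarrow> real"
  assumes "inj lam" and roots: "\<And>k. det (lam k *\<^sub>R mat 1 - A) = 0"
  shows "det (x *\<^sub>R mat 1 - A) = (\<Prod>k\<in>UNIV. x - lam k)"
proof -
  define Q where "Q = (\<Prod>k\<in>(UNIV::'n set). [:- lam k, 1:])"
  have poly_Q: "poly Q y = (\<Prod>k\<in>UNIV. y - lam k)" for y
    by (simp add: Q_def poly_prod)
  have degree_Q: "degree Q = CARD('n)"
    unfolding Q_def by (subst degree_prod_eq_sum_degree) auto
  have "lead_coeff Q = 1"
    by (simp add: Q_def lead_coeff_prod)
  have "charpoly A - Q = 0"
  proof (rule ccontr)
    assume nz: "charpoly A - Q \<noteq> 0"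
    have "degree (charpoly A - Q) \<le> CARD('n)"
      using degree_diff_le degree_charpoly_le degree_Q by (metis order.refl)
    moreover have "coeff (charpoly A - Q) CARD('n) = 0"
      using coeff_charpoly_card \<open>lead_coeff Q = 1\<close> degree_Q by simp
    ultimately have "degree (charpoly A - Q) < CARD('n)"
      using nz by (metis leading_coeff_0_iff le_neq_implies_less)
    moreover have "CARD('n) \<le> card {y. poly (charpoly A - Q) y = 0}"
    proof -
      have "range lam \<subseteq> {y. poly (charpoly A - Q) y = 0}"
        using roots by (auto simp: poly_charpoly poly_Q)
      then have "card (range lam) \<le> card {y. poly (charpoly A - Q) y = 0}"
        by (rule card_mono[OF poly_roots_finite[OF nz]])
      with \<open>inj lam\<close> show ?thesis by (simp add: card_image)
    qed
    ultimately show False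
      using card_poly_roots_bound[OF nz] by linarith
  qed
  then have "poly (charpoly A) x = poly Q x" by simp
  then show ?thesis by (simp add: poly_charpoly poly_Q)
qed

lemma spec_is_if_roots:
  fixes A :: "real^'n^'n" and lam :: "'n \<Rightarrow> real"
  assumes "bij_betw lam UNIV \<sigma>" and "\<And>k. det (lam k *\<^sub>R mat 1 - A) = 0"
  shows "spec_is A (mset_set \<sigma>)"
  unfolding spec_is_def
proof
  fix x
  have "det (x *\<^sub>R mat 1 - A) = (\<Prod>k\<in>UNIV. x - lam k)"
    by (rule char_det_eq_prod_if_roots[OF bij_betw_imp_inj_on[OF assms(1)]]) (rule assms(2))
  also have "\<dots> = (\<Prod>\<mu>\<in>\<sigma>. x - \<mu>)"
    by (rule prod.reindex_bij_betw[OF assms(1)])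
  finally show "det (x *\<^sub>R mat 1 - A) = (\<Prod>\<mu>\<in>#mset_set \<sigma>. x - \<mu>)"
    by (simp add: prod_unfold_prod_mset)
qed

lemma det_char_eq_0_imp_eigenvector:
  fixes A :: "real^'n^'n"
  assumes "det (\<mu> *\<^sub>R mat 1 - A) = 0"
  obtains v where "v \<noteq> 0" "A *v v = \<mu> *\<^sub>R v"
proof -
  have "rank (\<mu> *\<^sub>R mat 1 - A) < CARD('n)"
    using assms by (simp add: det_eq_0_rank)
  then obtain v where "v \<noteq> 0" "(\<mu> *\<^sub>R mat 1 - A) *v v = 0"
    using matrix_nonfull_linear_equations_eq by fastforce
  moreover have "(\<mu> *\<^sub>R mat 1 - A) *v v = \<mu> *\<^sub>R v - A *v v"
    by (simp add: matrix_vector_mult_diff_rdistrib flip: scaleR_matrix_vector_assoc)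
  ultimately show ?thesis
    using that by auto
qed

lemma continuous_on_det:
  fixes M :: "'a::topological_space \<Rightarrow> real^'n^'n"
  assumes "\<And>i j. continuous_on S (\<lambda>x. M x $ i $ j)"
  shows "continuous_on S (\<lambda>x. det (M x))"
  unfolding det_def by (intro continuous_intros assms)

section \<open>Diagonal matrices with a small off-diagonal part\<close>

definition diag_offdiag :: "real^'n \<Rightarrow> real \<Rightarrow> ('n \<Rightarrow> 'n \<Rightarrow> real) \<Rightarrow> real^'n^'n" where
  "diag_offdiag d t W = (\<chi> i j. if i = j then d$i else t * W i j)"

lemma diag_offdiag_entry:
  assumes "\<And>i. W i i = 0"
  shows "diag_offdiag d t W $ i $ l = (if i = l then d$i else 0) + t * W i l"
  using assms by (simp add: diag_offdiag_def)

lemma diag_offdiag_mult_entry: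
  assumes "\<And>i. W i i = 0"
  shows "(diag_offdiag d t W ** X)$i$j = d$i * X$i$j + t * (\<Sum>l\<in>UNIV. W i l * X$l$j)"
  by (simp add: matrix_matrix_mult_def diag_offdiag_entry[OF assms] distrib_left distrib_right
      sum.distrib sum_distrib_left mult_ac if_distrib[of "\<lambda>x. x * _"] if_distrib[of "\<lambda>x. _ * x"] cong: if_cong)

lemma mult_diag_offdiag_entry:
  assumes "\<And>i. W i i = 0"
  shows "(X ** diag_offdiag d t W)$i$j = X$i$j * d$j + t * (\<Sum>l\<in>UNIV. X$i$l * W l j)"
  by (simp add: matrix_matrix_mult_def diag_offdiag_entry[OF assms] distrib_left distrib_right
      sum.distrib sum_distrib_left mult_ac if_distrib[of "\<lambda>x. x * _"] if_distrib[of "\<lambda>x. _ * x"] cong: if_cong)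

lemma diag_offdiag_mult_vec_entry:
  assumes "\<And>i. W i i = 0"
  shows "(diag_offdiag d t W *v v)$i = d$i * v$i + t * (\<Sum>l\<in>UNIV. W i l * v$l)"
  by (simp add: matrix_vector_mult_def diag_offdiag_entry[OF assms] distrib_left distrib_right
      sum.distrib sum_distrib_left mult_ac if_distrib[of "\<lambda>x. x * _"] if_distrib[of "\<lambda>x. _ * x"] cong: if_cong)

lemma diag_offdiag_in_S_graph:
  assumes "\<And>i j. W i j = W j i" and "\<And>i j. i \<noteq> j \<Longrightarrow> W i j \<noteq> 0 \<longleftrightarrow> E i j"
    and "t \<noteq> 0"
  shows "diag_offdiag d t W \<in> S_graph E"
  unfolding S_graph_def symmetric_mat_def
proof (intro CollectI conjI allI impI)
  show "transpose (diag_offdiag d t W) = diag_offdiag d t W"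
    using assms(1) by (simp add: vec_eq_iff transpose_def diag_offdiag_def)
  show "diag_offdiag d t W $ i $ j \<noteq> 0 \<longleftrightarrow> E i j" if "i \<noteq> j" for i j
    using assms(2)[OF that] \<open>t \<noteq> 0\<close> that by (simp add: diag_offdiag_def)
qed

lemma det_char_diag_offdiag_0:
  "det (\<mu> *\<^sub>R mat 1 - diag_offdiag d 0 W) = (\<Prod>l\<in>UNIV. \<mu> - d$l)"
  by (subst det_diagonal) (simp_all add: diag_offdiag_def mat_def)

lemma abs_sum_mult_le:
  fixes a b :: "'a \<Rightarrow> real"
  assumes "\<And>l. l \<in> A \<Longrightarrow> \<bar>a l\<bar> \<le> K"
  shows "\<bar>\<Sum>l\<in>A. a l * b l\<bar> \<le> K * (\<Sum>l\<in>A. \<bar>b l\<bar>)"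
proof -
  have "\<bar>\<Sum>l\<in>A. a l * b l\<bar> \<le> (\<Sum>l\<in>A. \<bar>a l\<bar> * \<bar>b l\<bar>)"
    using sum_abs[of "\<lambda>l. a l * b l" A] by (simp add: abs_mult)
  also have "\<dots> \<le> (\<Sum>l\<in>A. K * \<bar>b l\<bar>)"
    by (intro sum_mono mult_right_mono assms) auto
  finally show ?thesis by (simp add: sum_distrib_left)
qed

lemma SSP_diag_offdiag:
  fixes d :: "real^'n::finite"
  assumes gap: "\<And>i j. i \<noteq> j \<Longrightarrow> h \<le> \<bar>d$i - d$j\<bar>"
    and W_bound: "\<And>i j. \<bar>W i j\<bar> \<le> K" and W_diag: "\<And>i. W i i = 0"
    and small: "2 * real CARD('n) * t * K < h" and "t \<ge> 0"
  shows "SSP (diag_offdiag d t W)"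
  unfolding SSP_def
proof (intro allI impI)
  fix X :: "real^'n^'n"
  let ?A = "diag_offdiag d t W"
  assume "symmetric_mat X \<and> hadamard ?A X = 0 \<and> hadamard (mat 1) X = 0 \<and> ?A ** X - X ** ?A = 0"
  then have X_diag: "X$i$i = 0" and comm: "?A ** X = X ** ?A" for i
    by (auto simp: hadamard_def mat_def vec_eq_iff dest!: spec[of _ i])
  define m where "m = Max (range (\<lambda>(a, b). \<bar>X$a$b\<bar>))"
  have le_m: "\<bar>X$a$b\<bar> \<le> m" for a b
    unfolding m_def by (rule Max_ge) auto
  have "m \<in> range (\<lambda>(a, b). \<bar>X$a$b\<bar>)"
    unfolding m_def by (rule Max_in) auto
  then obtain i j where m_attained: "m = \<bar>X$i$j\<bar>"
    by auto
  have sum_bound: "\<bar>\<Sum>l\<in>UNIV. w l * x l\<bar> \<le> K * (real CARD('n) * m)"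
    if "\<And>l. \<bar>w l\<bar> \<le> K" "\<And>l. \<bar>x l\<bar> \<le> m" for w x :: "'n \<Rightarrow> real"
  proof -
    have "\<bar>\<Sum>l\<in>UNIV. w l * x l\<bar> \<le> K * (\<Sum>l\<in>UNIV. \<bar>x l\<bar>)"
      using that(1) by (rule abs_sum_mult_le)
    also have "\<dots> \<le> K * (real CARD('n) * m)"
      using W_bound[of i i] that(2) sum_bounded_above[of UNIV "\<lambda>l. \<bar>x l\<bar>" m]
      by (intro mult_left_mono) auto
    finally show ?thesis .
  qed
  have "m = 0"
  proof (cases "i = j")
    case False
    \<comment> \<open>compare the entries of \<open>A X = X A\<close> at an entry of X of largest modulus\<close>
    have "(d$i - d$j) * X$i$j = t * ((\<Sum>l\<in>UNIV. W l j * X$i$l) - (\<Sum>l\<in>UNIV. W i l * X$l$j))"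
      using arg_cong[OF comm, of "\<lambda>M. M$i$j"]
      by (simp add: diag_offdiag_mult_entry mult_diag_offdiag_entry W_diag mult.commute
          algebra_simps)
    then have "\<bar>(d$i - d$j) * X$i$j\<bar>
        = \<bar>t * ((\<Sum>l\<in>UNIV. W l j * X$i$l) - (\<Sum>l\<in>UNIV. W i l * X$l$j))\<bar>"
      by (rule arg_cong)
    then have "\<bar>d$i - d$j\<bar> * m = t * \<bar>(\<Sum>l\<in>UNIV. W l j * X$i$l) - (\<Sum>l\<in>UNIV. W i l * X$l$j)\<bar>"
      using \<open>t \<ge> 0\<close> by (simp only: abs_mult abs_of_nonneg m_attained)
    also have "\<dots> \<le> t * (\<bar>\<Sum>l\<in>UNIV. W l j * X$i$l\<bar> + \<bar>\<Sum>l\<in>UNIV. W i l * X$l$j\<bar>)"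
      using \<open>t \<ge> 0\<close> by (intro mult_left_mono abs_triangle_ineq4)
    also have "\<dots> \<le> t * (2 * (K * (real CARD('n) * m)))"
      using sum_bound[of "\<lambda>l. W l j" "\<lambda>l. X$i$l"] sum_bound[of "\<lambda>l. W i l" "\<lambda>l. X$l$j"]
        W_bound le_m \<open>t \<ge> 0\<close>
      by (intro mult_left_mono) auto
    finally have "\<bar>d$i - d$j\<bar> * m \<le> t * (2 * (K * (real CARD('n) * m)))" .
    moreover have "h * m \<le> \<bar>d$i - d$j\<bar> * m"
      using gap[OF False] by (intro mult_right_mono) (auto simp: m_attained)
    ultimately have "(h - 2 * real CARD('n) * t * K) * m \<le> 0"
      by (simp add: algebra_simps)
    with small show "m = 0"
      using m_attained by (simp add: mult_le_0_iff)
  qed (simp add: m_attained X_diag)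
  with le_m show "X = 0"
    by (simp add: vec_eq_iff)
qed

section \<open>Second-order perturbation of a diagonal entry\<close>

lemma diag_offdiag_eigen_equation:
  assumes "diag_offdiag d t W *v v = \<mu> *\<^sub>R v" and "\<And>i. W i i = 0"
  shows "(d$j - \<mu>) * v$j = - t * (\<Sum>l\<in>UNIV. W j l * v$l)"
  using arg_cong[OF assms(1), of "\<lambda>v. v$j"]
  by (simp add: diag_offdiag_mult_vec_entry assms(2) algebra_simps)

lemma diag_offdiag_eigen_equation_abs:
  assumes "diag_offdiag d t W *v v = \<mu> *\<^sub>R v" and "\<And>i. W i i = 0" and "t \<ge> 0"
  shows "\<bar>d$j - \<mu>\<bar> * \<bar>v$j\<bar> = t * \<bar>\<Sum>l\<in>UNIV. W j l * v$l\<bar>"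
proof -
  have "\<bar>d$j - \<mu>\<bar> * \<bar>v$j\<bar> = \<bar>- t * (\<Sum>l\<in>UNIV. W j l * v$l)\<bar>"
    by (simp only: abs_mult[symmetric] diag_offdiag_eigen_equation[OF assms(1,2)])
  with \<open>t \<ge> 0\<close> show ?thesis
    by (simp add: abs_mult)
qed

lemma eigenvector_off_peak_bound:
  fixes d u :: "real^'n::finite"
  assumes ev: "diag_offdiag d t W *v u = \<mu> *\<^sub>R u"
    and gap: "\<And>j. j \<noteq> i \<Longrightarrow> h \<le> \<bar>d$j - \<mu>\<bar>" and "h > 0"
    and W_bound: "\<And>j l. \<bar>W j l\<bar> \<le> K" and W_diag: "\<And>j. W j j = 0" and "t \<ge> 0"
    and small: "real CARD('n) * t * K \<le> h / 2"
  shows "(\<Sum>l\<in>UNIV - {i}. \<bar>u$l\<bar>) \<le> 2 * real CARD('n) * t * K / h * \<bar>u$i\<bar>"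
proof -
  define n where "n = real CARD('n)"
  define S where "S = (\<Sum>l\<in>UNIV - {i}. \<bar>u$l\<bar>)"
  have "K \<ge> 0" using W_bound[of i i] by linarith
  have "S \<ge> 0" by (simp add: S_def sum_nonneg)
  have total: "(\<Sum>l\<in>UNIV. \<bar>u$l\<bar>) = \<bar>u$i\<bar> + S"
    by (simp add: S_def sum.remove[of UNIV i])
  have entry_bound: "h * \<bar>u$j\<bar> \<le> t * K * (\<bar>u$i\<bar> + S)" if "j \<noteq> i" for j
  proof -
    have "h * \<bar>u$j\<bar> \<le> \<bar>d$j - \<mu>\<bar> * \<bar>u$j\<bar>"
      using gap[OF that] by (intro mult_right_mono) auto
    also have "\<dots> = t * \<bar>\<Sum>l\<in>UNIV. W j l * u$l\<bar>"
      by (rule diag_offdiag_eigen_equation_abs[OF ev W_diag \<open>t \<ge> 0\<close>])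
    also have "\<dots> \<le> t * (K * (\<bar>u$i\<bar> + S))"
      unfolding total[symmetric] using W_bound \<open>t \<ge> 0\<close>
      by (intro mult_left_mono abs_sum_mult_le) auto
    finally show ?thesis by simp
  qed
  have "h * S = (\<Sum>j\<in>UNIV - {i}. h * \<bar>u$j\<bar>)"
    by (simp add: S_def sum_distrib_left)
  also have "\<dots> \<le> real (card (UNIV - {i} :: 'n set)) * (t * K * (\<bar>u$i\<bar> + S))"
    using entry_bound by (intro sum_bounded_above) auto
  also have "\<dots> \<le> n * (t * K * (\<bar>u$i\<bar> + S))"
    using \<open>t \<ge> 0\<close> \<open>K \<ge> 0\<close> \<open>S \<ge> 0\<close> unfolding n_def
    by (intro mult_right_mono) (auto simp: card_mono)
  finally have hS: "h * S \<le> n * t * K * (\<bar>u$i\<bar> + S)"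
    by (simp add: mult.assoc)
  also have "\<dots> \<le> h / 2 * (\<bar>u$i\<bar> + S)"
    using small \<open>S \<ge> 0\<close> by (intro mult_right_mono) (auto simp: n_def)
  finally have "h * S \<le> h * \<bar>u$i\<bar>"
    by (simp add: algebra_simps)
  then have "S \<le> \<bar>u$i\<bar>"
    using \<open>h > 0\<close> by simp
  then have "n * t * K * (\<bar>u$i\<bar> + S) \<le> n * t * K * (2 * \<bar>u$i\<bar>)"
    using \<open>t \<ge> 0\<close> \<open>K \<ge> 0\<close> by (intro mult_left_mono) (auto simp: n_def)
  with hS have "h * S \<le> 2 * n * t * K * \<bar>u$i\<bar>"
    by simp
  then show ?thesis
    using \<open>h > 0\<close> by (simp add: S_def n_def pos_le_divide_eq mult.commute)
qed

lemma eigenvalue_second_order_estimate: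
  fixes d u :: "real^'n::finite"
  assumes ev: "diag_offdiag d t W *v u = \<mu> *\<^sub>R u" and "u$i = 1"
    and gap: "\<And>j. j \<noteq> i \<Longrightarrow> h \<le> \<bar>d$j - \<mu>\<bar>" and "h > 0"
    and W_bound: "\<And>j l. \<bar>W j l\<bar> \<le> K" and W_diag: "\<And>j. W j j = 0" and "t \<ge> 0"
    and small: "real CARD('n) * t * K \<le> h / 2"
  shows "\<bar>d$i - \<mu> - t^2 * (\<Sum>j\<in>UNIV. W i j * W j i / (d$j - \<mu>))\<bar>
           \<le> 2 * real CARD('n)^2 * t^3 * K^3 / h^2"
proof -
  define n where "n = real CARD('n)"
  define S where "S = (\<Sum>l\<in>UNIV - {i}. \<bar>u$l\<bar>)"
  define r where "r j = (\<Sum>l\<in>UNIV - {i}. W j l * u$l)" for j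
  have "K \<ge> 0" using W_bound[of i i] by linarith
  have "S \<ge> 0" by (simp add: S_def sum_nonneg)
  have S_bound: "S \<le> 2 * n * t * K / h"
    using eigenvector_off_peak_bound[where i=i, OF ev gap \<open>h > 0\<close> W_bound W_diag \<open>t \<ge> 0\<close> small] \<open>u$i = 1\<close>
    by (simp add: S_def n_def)
  have r_bound: "\<bar>r j\<bar> \<le> K * S" for j
    unfolding r_def S_def using W_bound by (rule abs_sum_mult_le)
  have row: "(\<Sum>l\<in>UNIV. W j l * u$l) = W j i + r j" for j
    using \<open>u$i = 1\<close> by (simp add: r_def sum.remove[of UNIV i])
  have u_off: "u$j = - t * (W j i + r j) / (d$j - \<mu>)" if "j \<noteq> i" for j
  proof -
    have "d$j - \<mu> \<noteq> 0" using gap[OF that] \<open>h > 0\<close> by auto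
    moreover have "(d$j - \<mu>) * u$j = - t * (W j i + r j)"
      using diag_offdiag_eigen_equation[OF ev W_diag, of j] unfolding row .
    ultimately show ?thesis
      by (simp add: field_simps)
  qed
  have "d$i - \<mu> = - t * (\<Sum>j\<in>UNIV. W i j * u$j)"
    using diag_offdiag_eigen_equation[OF ev W_diag, of i] \<open>u$i = 1\<close> by simp
  also have "\<dots> = (\<Sum>j\<in>UNIV. t^2 * (W i j * (W j i + r j) / (d$j - \<mu>)))"
    unfolding sum_distrib_left
  proof (intro sum.cong refl)
    fix j
    show "- t * (W i j * u$j) = t^2 * (W i j * (W j i + r j) / (d$j - \<mu>))"
      by (cases "j = i") (simp_all add: W_diag u_off power2_eq_square)
  qed
  finally have expansion: "d$i - \<mu> - t^2 * (\<Sum>j\<in>UNIV. W i j * W j i / (d$j - \<mu>))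
      = t^2 * (\<Sum>j\<in>UNIV. W i j * r j / (d$j - \<mu>))"
    by (simp add: sum_distrib_left distrib_left add_divide_distrib sum.distrib)
  have remainder_bound: "\<bar>\<Sum>j\<in>UNIV. W i j * r j / (d$j - \<mu>)\<bar> \<le> n * (K * (K * S) / h)"
  proof -
    have "\<bar>W i j * r j / (d$j - \<mu>)\<bar> \<le> K * (K * S) / h" for j
    proof (cases "j = i")
      case False
      have "\<bar>W i j * r j / (d$j - \<mu>)\<bar> = \<bar>W i j\<bar> * \<bar>r j\<bar> / \<bar>d$j - \<mu>\<bar>"
        by (simp add: abs_mult)
      also have "\<dots> \<le> K * (K * S) / \<bar>d$j - \<mu>\<bar>"
        using W_bound r_bound \<open>K \<ge> 0\<close> by (intro divide_right_mono mult_mono) auto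
      also have "\<dots> \<le> K * (K * S) / h"
        using gap[OF False] \<open>h > 0\<close> \<open>K \<ge> 0\<close> \<open>S \<ge> 0\<close> by (intro divide_left_mono) auto
      finally show ?thesis .
    qed (use \<open>K \<ge> 0\<close> \<open>S \<ge> 0\<close> \<open>h > 0\<close> W_diag in simp)
    then have "(\<Sum>j\<in>UNIV. \<bar>W i j * r j / (d$j - \<mu>)\<bar>) \<le> n * (K * (K * S) / h)"
      unfolding n_def by (intro sum_bounded_above) auto
    then show ?thesis
      by (rule order_trans[OF sum_abs])
  qed
  have "\<bar>d$i - \<mu> - t^2 * (\<Sum>j\<in>UNIV. W i j * W j i / (d$j - \<mu>))\<bar>
      = t^2 * \<bar>\<Sum>j\<in>UNIV. W i j * r j / (d$j - \<mu>)\<bar>"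
    unfolding expansion by (simp add: abs_mult)
  also have "\<dots> \<le> t^2 * (n * (K * (K * S) / h))"
    by (rule mult_left_mono[OF remainder_bound]) simp
  also have "\<dots> \<le> t^2 * (n * (K * (K * (2 * n * t * K / h)) / h))"
    using S_bound \<open>K \<ge> 0\<close> \<open>h > 0\<close>
    by (intro mult_left_mono divide_right_mono mult_mono) (auto simp: n_def)
  also have "\<dots> = 2 * n^2 * t^3 * K^3 / h^2"
    by (simp add: power2_eq_square power3_eq_cube)
  finally show ?thesis by (simp add: n_def)
qed

lemma char_root_second_order_estimate:
  fixes d :: "real^'n::finite"
  assumes root: "det (\<mu> *\<^sub>R mat 1 - diag_offdiag d t W) = 0"
    and gap: "\<And>j. j \<noteq> i \<Longrightarrow> h \<le> \<bar>d$j - \<mu>\<bar>" and "h > 0"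
    and W_bound: "\<And>j l. \<bar>W j l\<bar> \<le> K" and W_diag: "\<And>j. W j j = 0" and "t \<ge> 0"
    and small: "real CARD('n) * t * K \<le> h / 2"
  shows "\<bar>d$i - \<mu> - t^2 * (\<Sum>j\<in>UNIV. W i j * W j i / (d$j - \<mu>))\<bar>
           \<le> 2 * real CARD('n)^2 * t^3 * K^3 / h^2"
proof -
  obtain v where "v \<noteq> 0" and ev: "diag_offdiag d t W *v v = \<mu> *\<^sub>R v"
    using det_char_eq_0_imp_eigenvector[OF root] .
  have "v$i \<noteq> 0"
  proof
    assume "v$i = 0"
    then have "(\<Sum>l\<in>UNIV - {i}. \<bar>v$l\<bar>) = 0"
      using eigenvector_off_peak_bound[where i=i, OF ev gap \<open>h > 0\<close> W_bound W_diag \<open>t \<ge> 0\<close> small]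
      by (simp add: sum_nonneg antisym)
    with \<open>v$i = 0\<close> have "v = 0"
      by (auto simp: vec_eq_iff sum_nonneg_eq_0_iff)
    with \<open>v \<noteq> 0\<close> show False ..
  qed
  define u where "u = (1 / v$i) *\<^sub>R v"
  have "diag_offdiag d t W *v u = \<mu> *\<^sub>R u"
    by (simp add: u_def ev matrix_vector_mult_scaleR)
  moreover have "u$i = 1"
    using \<open>v$i \<noteq> 0\<close> by (simp add: u_def)
  ultimately show ?thesis
    by (rule eigenvalue_second_order_estimate[OF _ _ gap \<open>h > 0\<close> W_bound W_diag \<open>t \<ge> 0\<close> small])
qed

text \<open>The coefficient c_i of t^2 in d_i - lam_i when lam_i is an eigenvalue of
  \<^term>\<open>diag_offdiag d t W\<close>. The summand j = i vanishes since x / 0 = 0.\<close>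

definition shift_coeff :: "('n::finite \<Rightarrow> 'n \<Rightarrow> real) \<Rightarrow> ('n \<Rightarrow> real) \<Rightarrow> 'n \<Rightarrow> real" where
  "shift_coeff W lam i = (\<Sum>j\<in>UNIV. W i j * W j i / (lam j - lam i))"

lemma shift_coeff_perturb_bound:
  fixes d :: "real^'n::finite" and lam :: "'n \<Rightarrow> real"
  assumes close: "\<And>j. \<bar>d$j - lam j\<bar> \<le> \<eta>" and "\<eta> \<le> g / 2" and "g > 0"
    and gap: "\<And>j. j \<noteq> i \<Longrightarrow> g \<le> \<bar>lam j - lam i\<bar>"
    and W_bound: "\<And>j l. \<bar>W j l\<bar> \<le> K" and W_diag: "\<And>j. W j j = 0"
  shows "\<bar>(\<Sum>j\<in>UNIV. W i j * W j i / (d$j - lam i)) - shift_coeff W lam i\<bar>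
           \<le> real CARD('n) * (2 * K^2 * \<eta> / g^2)"
proof -
  have "K \<ge> 0" and "\<eta> \<ge> 0"
    using W_bound[of i i] close[of i] by linarith+
  have term_bound: "\<bar>W i j * W j i / (d$j - lam i) - W i j * W j i / (lam j - lam i)\<bar>
      \<le> 2 * K^2 * \<eta> / g^2" for j
  proof (cases "j = i")
    case False
    have g1: "g \<le> \<bar>lam j - lam i\<bar>" and g2: "g / 2 \<le> \<bar>d$j - lam i\<bar>"
      using gap[OF False] close[of j] \<open>\<eta> \<le> g / 2\<close> by linarith+
    then have "lam j - lam i \<noteq> 0" "d$j - lam i \<noteq> 0"
      using \<open>g > 0\<close> by auto
    then have "W i j * W j i / (d$j - lam i) - W i j * W j i / (lam j - lam i)
        = W i j * W j i * (lam j - d$j) / ((d$j - lam i) * (lam j - lam i))"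
      by (simp add: field_simps)
    then have "\<bar>W i j * W j i / (d$j - lam i) - W i j * W j i / (lam j - lam i)\<bar>
        = \<bar>W i j\<bar> * \<bar>W j i\<bar> * \<bar>lam j - d$j\<bar> / (\<bar>d$j - lam i\<bar> * \<bar>lam j - lam i\<bar>)"
      by (simp add: abs_mult)
    also have "\<dots> \<le> K * K * \<eta> / (\<bar>d$j - lam i\<bar> * \<bar>lam j - lam i\<bar>)"
      using W_bound \<open>K \<ge> 0\<close> close[of j] \<open>\<eta> \<ge> 0\<close>
      by (intro divide_right_mono mult_mono) (auto simp: abs_minus_commute)
    also have "\<dots> \<le> K * K * \<eta> / (g / 2 * g)"
      using g1 g2 \<open>g > 0\<close> \<open>K \<ge> 0\<close> \<open>\<eta> \<ge> 0\<close>
      by (intro divide_left_mono mult_mono) (auto intro!: mult_pos_pos)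
    finally show ?thesis
      by (simp add: power2_eq_square mult_ac)
  qed (use \<open>\<eta> \<ge> 0\<close> \<open>g > 0\<close> W_diag in simp)
  have "\<bar>(\<Sum>j\<in>UNIV. W i j * W j i / (d$j - lam i)) - shift_coeff W lam i\<bar>
      \<le> (\<Sum>j\<in>UNIV. \<bar>W i j * W j i / (d$j - lam i) - W i j * W j i / (lam j - lam i)\<bar>)"
    unfolding shift_coeff_def sum_subtractf[symmetric] by (rule sum_abs)
  also have "\<dots> \<le> real CARD('n) * (2 * K^2 * \<eta> / g^2)"
    using term_bound by (intro sum_bounded_above) auto
  finally show ?thesis .
qed

lemma diag_entry_ne_root:
  fixes d :: "real^'n::finite" and lam :: "'n \<Rightarrow> real"
  assumes root: "det (lam i *\<^sub>R mat 1 - diag_offdiag d t W) = 0"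
    and gap: "\<And>j. j \<noteq> i \<Longrightarrow> g \<le> \<bar>lam j - lam i\<bar>" and "g > 0"
    and close: "\<And>j. \<bar>d$j - lam j\<bar> \<le> \<eta>" and "\<eta> \<le> g / 2"
    and W_bound: "\<And>j l. \<bar>W j l\<bar> \<le> K" and W_diag: "\<And>j. W j j = 0" and "K > 0"
    and "c > 0" and c_le: "c \<le> \<bar>shift_coeff W lam i\<bar>"
    and \<eta>_small: "\<eta> \<le> c * g^2 / (8 * real CARD('n) * K^2)"
    and "t > 0" and t_small: "real CARD('n) * t * K \<le> g / 4"
      "t < c * g^2 / (16 * real CARD('n)^2 * K^3)"
  shows "d$i \<noteq> lam i"
proof
  assume "d$i = lam i"
  define n where "n = real CARD('n)"
  define D where "D = (\<Sum>j\<in>UNIV. W i j * W j i / (d$j - lam i))"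
  have "n > 0" by (simp add: n_def)
  have sep: "g / 2 \<le> \<bar>d$j - lam i\<bar>" if "j \<noteq> i" for j
    using gap[OF that] close[of j] \<open>\<eta> \<le> g / 2\<close> by linarith
  have "\<bar>t^2 * D\<bar> \<le> 2 * n^2 * t^3 * K^3 / (g / 2)^2"
    using char_root_second_order_estimate[where i=i and h="g / 2", OF root sep _ W_bound W_diag]
      \<open>g > 0\<close> \<open>t > 0\<close> t_small(1) \<open>d$i = lam i\<close>
    by (simp add: D_def n_def)
  also have "\<dots> = t^2 * (8 * n^2 * K^3 * t / g^2)"
    by (simp add: power2_eq_square power3_eq_cube)
  also have "\<dots> < t^2 * (c / 2)"
  proof -
    have "t * (16 * n^2 * K^3) < c * g^2"
      using t_small(2) \<open>n > 0\<close> \<open>K > 0\<close> by (simp add: n_def pos_less_divide_eq)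
    then have "8 * n^2 * K^3 * t / g^2 < c / 2"
      using \<open>g > 0\<close> by (simp add: pos_divide_less_eq algebra_simps)
    then show ?thesis
      using \<open>t > 0\<close> by (intro mult_strict_left_mono) auto
  qed
  finally have upper: "\<bar>t^2 * D\<bar> < t^2 * (c / 2)" .
  have "\<bar>D - shift_coeff W lam i\<bar> \<le> n * (2 * K^2 * \<eta> / g^2)"
    unfolding D_def n_def
    by (rule shift_coeff_perturb_bound[OF close \<open>\<eta> \<le> g / 2\<close> \<open>g > 0\<close> gap W_bound W_diag])
  also have "\<dots> = (2 * n * K^2 / g^2) * \<eta>"
    by simp
  also have "\<dots> \<le> (2 * n * K^2 / g^2) * (c * g^2 / (8 * n * K^2))"
    using \<eta>_small \<open>n > 0\<close> by (intro mult_left_mono) (auto simp: n_def)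
  also have "\<dots> = c / 4"
    using \<open>n > 0\<close> \<open>K > 0\<close> \<open>g > 0\<close> by (simp add: power2_eq_square)
  finally have "3 * c / 4 \<le> \<bar>D\<bar>"
    using c_le by linarith
  then have "t^2 * (3 * c / 4) \<le> \<bar>t^2 * D\<bar>"
    unfolding abs_mult abs_power2 by (rule mult_left_mono) auto
  moreover have "t^2 * (c / 2) < t^2 * (3 * c / 4)"
    using \<open>c > 0\<close> \<open>t > 0\<close> by (intro mult_strict_left_mono) auto
  ultimately show False
    using upper by linarith
qed

section \<open>Prescribing the eigenvalues\<close>

lemma mem_cball_imp_abs_component_le:
  "d \<in> cball (\<chi> k. lam k) \<eta> \<Longrightarrow> \<bar>d$j - lam j\<bar> \<le> \<eta>"
  using component_le_norm_cart[of "(\<chi> k. lam k) - d" j] by (simp add: dist_norm abs_minus_commute)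

lemma exists_zero_near_product:
  fixes f :: "real^'n::finite \<Rightarrow> real^'n" and lam :: "'n \<Rightarrow> real" and g \<eta> :: real
  defines "P \<equiv> (g / 2) ^ (CARD('n) - 1)"
  assumes cont: "continuous_on (cball (\<chi> k. lam k) \<eta>) f"
    and gap: "\<And>k l. k \<noteq> l \<Longrightarrow> g \<le> \<bar>lam k - lam l\<bar>" and "0 < \<eta>" "\<eta> \<le> g / 2"
    and close: "\<And>d k. d \<in> cball (\<chi> k. lam k) \<eta> \<Longrightarrow>
      \<bar>f d $ k - (\<Prod>l\<in>UNIV. lam k - d$l)\<bar> \<le> \<eta> * P / real CARD('n)"
  obtains d where "d \<in> cball (\<chi> k. lam k) \<eta>" "f d = 0"
proof -
  define S where "S = cball (\<chi> k. lam k) \<eta>"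
  define Q where "Q d k = (\<Prod>l\<in>UNIV - {k}. lam k - d$l)" for d :: "real^'n" and k
  have "g > 0" "P > 0"
    using \<open>0 < \<eta>\<close> \<open>\<eta> \<le> g / 2\<close> by (auto simp: P_def)
  have near: "\<bar>d$l - lam l\<bar> \<le> \<eta>" if "d \<in> S" for d l
    using that unfolding S_def by (rule mem_cball_imp_abs_component_le)
  have far: "g / 2 \<le> \<bar>lam k - d$l\<bar>" if "d \<in> S" "l \<noteq> k" for d k l
    using gap[of k l] near[OF that(1), of l] \<open>\<eta> \<le> g / 2\<close> that(2) by (auto simp: abs_if split: if_splits)
  have Q_bound: "P \<le> \<bar>Q d k\<bar>" if "d \<in> S" for d k
  proof -
    have "P = (\<Prod>l\<in>UNIV - {k}. g / 2)"
      by (simp add: P_def card_Diff_singleton)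
    also have "\<dots> \<le> (\<Prod>l\<in>UNIV - {k}. \<bar>lam k - d$l\<bar>)"
      using \<open>g > 0\<close> far[OF that] by (intro prod_mono) auto
    finally show ?thesis
      by (simp add: Q_def abs_prod)
  qed
  have Q_nonzero: "Q d k \<noteq> 0" if "d \<in> S" for d k
    using Q_bound[OF that, of k] \<open>P > 0\<close> by auto
  have prod_split: "(\<Prod>l\<in>UNIV. lam k - d$l) = (lam k - d$k) * Q d k" for d k
    by (simp add: Q_def prod.remove)
  \<comment> \<open>\<open>T d - lam = (f d - \<Prod>(lam - d)) / Q d\<close>, so T maps S into itself;
    its fixed points are zeros of f\<close>
  define T where "T d = (\<chi> k. d$k + f d $ k / Q d k)" for d
  have "continuous_on S T"
    unfolding T_def Q_def using cont Q_nonzero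
    by (intro continuous_intros continuous_on_component) (auto simp: S_def Q_def)
  moreover have "T \<in> S \<rightarrow> S"
  proof
    fix d assume "d \<in> S"
    have "\<bar>((\<chi> k. lam k) - T d)$k\<bar> \<le> \<eta> * P / real CARD('n) / P" for k
    proof -
      have "((\<chi> k. lam k) - T d)$k = - (f d $ k - (\<Prod>l\<in>UNIV. lam k - d$l)) / Q d k"
        using Q_nonzero[OF \<open>d \<in> S\<close>, of k] by (simp add: T_def prod_split field_simps)
      then have "\<bar>((\<chi> k. lam k) - T d)$k\<bar>
          = \<bar>f d $ k - (\<Prod>l\<in>UNIV. lam k - d$l)\<bar> / \<bar>Q d k\<bar>"
        by (simp only: abs_divide abs_minus_cancel)
      also have "\<dots> \<le> \<eta> * P / real CARD('n) / P"
        using close[of d k] Q_bound[of d k] \<open>d \<in> S\<close> \<open>P > 0\<close> \<open>0 < \<eta>\<close>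
        by (intro frac_le) (auto simp: S_def)
      finally show ?thesis .
    qed
    then have "norm ((\<chi> k. lam k) - T d) \<le> real CARD('n) * (\<eta> * P / real CARD('n) / P)"
      using order_trans[OF norm_le_l1_cart sum_bounded_above] by blast
    then show "T d \<in> S"
      using \<open>P > 0\<close> by (simp add: S_def dist_norm)
  qed
  ultimately obtain d where "d \<in> S" "T d = d"
    using brouwer[of S T] \<open>0 < \<eta>\<close> by (auto simp: S_def)
  have "f d $ k = 0" for k
  proof -
    have "d$k + f d $ k / Q d k = d$k"
      using arg_cong[OF \<open>T d = d\<close>, of "\<lambda>v. v$k"] by (simp only: T_def vec_lambda_beta)
    with Q_nonzero[OF \<open>d \<in> S\<close>, of k] show ?thesis
      by simp
  qed
  with \<open>d \<in> S\<close> that show ?thesis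
    by (simp add: S_def vec_eq_iff)
qed

lemma eventually_diag_offdiag_with_roots:
  fixes lam :: "'n::finite \<Rightarrow> real"
  assumes gap: "\<And>k l. k \<noteq> l \<Longrightarrow> g \<le> \<bar>lam k - lam l\<bar>" and "0 < \<eta>" "\<eta> \<le> g / 2"
  shows "\<forall>\<^sub>F t in at_right 0. \<exists>d \<in> cball (\<chi> k. lam k) \<eta>.
           \<forall>k. det (lam k *\<^sub>R mat 1 - diag_offdiag d t W) = 0"
proof -
  define \<Phi> where "\<Phi> x = (\<chi> k. det (lam k *\<^sub>R mat 1 - diag_offdiag (fst x) (snd x) W))"
    for x :: "(real^'n) \<times> real"
  define \<tau> where "\<tau> = \<eta> * (g / 2) ^ (CARD('n) - 1) / real CARD('n)"
  have "\<tau> > 0"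
    using \<open>0 < \<eta>\<close> \<open>\<eta> \<le> g / 2\<close> by (simp add: \<tau>_def)
  have cont: "continuous_on UNIV \<Phi>"
    unfolding \<Phi>_def diag_offdiag_def
    by (intro continuous_on_vec_lambda continuous_on_det)
      (auto simp: mat_def intro!: continuous_intros)
  define C where "C = cball (\<chi> k. lam k) \<eta> \<times> cball (0::real) 1"
  have "uniformly_continuous_on C \<Phi>"
    by (rule compact_uniformly_continuous)
      (auto simp: C_def intro!: compact_Times continuous_on_subset[OF cont])
  then obtain \<delta> where "\<delta> > 0"
    and unif: "\<And>x x'. x \<in> C \<Longrightarrow> x' \<in> C \<Longrightarrow> dist x' x < \<delta> \<Longrightarrow> dist (\<Phi> x') (\<Phi> x) < \<tau>"
    unfolding uniformly_continuous_on_def using \<open>\<tau> > 0\<close> by metis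
  have "\<exists>d \<in> cball (\<chi> k. lam k) \<eta>. \<forall>k. det (lam k *\<^sub>R mat 1 - diag_offdiag d t W) = 0"
    if t: "t \<in> {0<..<min \<delta> 1}" for t
  proof -
    have "\<bar>\<Phi> (d, t) $ k - (\<Prod>l\<in>UNIV. lam k - d$l)\<bar> \<le> \<tau>"
      if "d \<in> cball (\<chi> k. lam k) \<eta>" for d k
    proof -
      have "dist (\<Phi> (d, t)) (\<Phi> (d, 0)) < \<tau>"
        using t that by (intro unif) (auto simp: C_def dist_Pair_Pair)
      moreover have "\<bar>(\<Phi> (d, t) - \<Phi> (d, 0)) $ k\<bar> \<le> dist (\<Phi> (d, t)) (\<Phi> (d, 0))"
        unfolding dist_norm by (rule component_le_norm_cart)
      ultimately show ?thesis
        by (simp add: \<Phi>_def det_char_diag_offdiag_0)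
    qed
    moreover have "continuous_on (cball (\<chi> k. lam k) \<eta>) (\<lambda>d. \<Phi> (d, t))"
      by (rule continuous_on_compose2[OF cont]) (auto intro!: continuous_intros)
    ultimately obtain d where "d \<in> cball (\<chi> k. lam k) \<eta>" "\<Phi> (d, t) = 0"
      using exists_zero_near_product[where f="\<lambda>d. \<Phi> (d, t)" and lam=lam,
          OF _ gap \<open>0 < \<eta>\<close> \<open>\<eta> \<le> g / 2\<close>]
      unfolding \<tau>_def by blast
    then show ?thesis
      by (auto simp: \<Phi>_def vec_eq_iff)
  qed
  then show ?thesis
    using eventually_at_right_real[of 0 "min \<delta> 1"] \<open>\<delta> > 0\<close> eventually_mono by force
qed

lemma exists_small_diag_offdiag_with_roots:
  fixes lam :: "'n::finite \<Rightarrow> real"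
  assumes gap: "\<And>k l. k \<noteq> l \<Longrightarrow> g \<le> \<bar>lam k - lam l\<bar>" and "0 < \<eta>" "\<eta> \<le> g / 2"
    and "t\<^sub>0 > 0"
  obtains t d where "0 < t" "t < t\<^sub>0" "\<And>j. \<bar>d$j - lam j\<bar> \<le> \<eta>"
    "\<And>k. det (lam k *\<^sub>R mat 1 - diag_offdiag d t W) = 0"
proof -
  have "\<forall>\<^sub>F t in at_right 0. t \<in> {0<..<t\<^sub>0} \<and> (\<exists>d \<in> cball (\<chi> k. lam k) \<eta>.
      \<forall>k. det (lam k *\<^sub>R mat 1 - diag_offdiag d t W) = 0)"
    using eventually_at_right_real[OF \<open>t\<^sub>0 > 0\<close>]
      eventually_diag_offdiag_with_roots[where lam=lam, OF gap \<open>0 < \<eta>\<close> \<open>\<eta> \<le> g / 2\<close>]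
    by (rule eventually_conj)
  then obtain t d where "t \<in> {0<..<t\<^sub>0}" and d: "d \<in> cball (\<chi> k. lam k) \<eta>"
    and "\<And>k. det (lam k *\<^sub>R mat 1 - diag_offdiag d t W) = 0"
    using eventually_happens'[OF trivial_limit_at_right_real] by blast
  then show ?thesis
    using mem_cball_imp_abs_component_le[OF d] by (intro that[of t d]) auto
qed

lemma finite_positive_lower_bound:
  fixes f :: "'a \<Rightarrow> real"
  assumes "finite A" "\<And>x. x \<in> A \<Longrightarrow> 0 < f x"
  obtains c where "0 < c" "\<And>x. x \<in> A \<Longrightarrow> c \<le> f x"
proof
  show "0 < Min (insert 1 (f ` A))"
    using assms by (subst Min_gr_iff) auto
  show "Min (insert 1 (f ` A)) \<le> f x" if "x \<in> A" for x
    using assms that by auto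
qed

lemma inj_min_gap:
  fixes lam :: "'a::finite \<Rightarrow> real"
  assumes "inj lam"
  obtains g where "0 < g" "\<And>i j. i \<noteq> j \<Longrightarrow> g \<le> \<bar>lam i - lam j\<bar>"
proof (rule finite_positive_lower_bound[of "{(i, j). i \<noteq> j}" "\<lambda>(i, j). \<bar>lam i - lam j\<bar>"])
  fix g assume "0 < g" and "\<And>p. p \<in> {(i, j). i \<noteq> j} \<Longrightarrow> g \<le> (\<lambda>(i, j). \<bar>lam i - lam j\<bar>) p"
  then show thesis
    using that[of g] by auto
qed (auto simp: assms inj_eq)

lemma finite_set_gap_to_values:
  fixes lam :: "'a::finite \<Rightarrow> real"
  assumes "finite F"
  obtains e where "0 < e" "\<And>i x. x \<in> F \<Longrightarrow> x \<noteq> lam i \<Longrightarrow> e \<le> \<bar>x - lam i\<bar>"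
proof (rule finite_positive_lower_bound[of "{(i, x). x \<in> F \<and> x \<noteq> lam i}" "\<lambda>(i, x). \<bar>x - lam i\<bar>"])
  show "finite {(i, x). x \<in> F \<and> x \<noteq> lam i}"
    by (rule finite_subset[of _ "UNIV \<times> F"]) (auto simp: assms)
  fix e assume "0 < e"
    and "\<And>p. p \<in> {(i, x). x \<in> F \<and> x \<noteq> lam i} \<Longrightarrow> e \<le> (\<lambda>(i, x). \<bar>x - lam i\<bar>) p"
  then show thesis
    using that[of e] by auto
qed auto

lemma finite_positive_upper_bound:
  fixes f :: "'a::finite \<Rightarrow> real"
  obtains K where "0 < K" "\<And>x. \<bar>f x\<bar> \<le> K"
proof
  show "0 < 1 + (\<Sum>x\<in>UNIV. \<bar>f x\<bar>)"
    by (simp add: add_pos_nonneg sum_nonneg)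
  show "\<bar>f x\<bar> \<le> 1 + (\<Sum>x\<in>UNIV. \<bar>f x\<bar>)" for x
    using member_le_sum[of x UNIV "\<lambda>x. \<bar>f x\<bar>"] by simp
qed

lemma exists_SSP_diag_offdiag:
  fixes lam :: "'n::finite \<Rightarrow> real" and F :: "real set"
  assumes "inj lam" and "finite F"
    and W_diag: "\<And>i. W i i = 0" and shift_nonzero: "\<And>i. shift_coeff W lam i \<noteq> 0"
  obtains d t where "t > 0" "SSP (diag_offdiag d t W)"
    "\<And>k. det (lam k *\<^sub>R mat 1 - diag_offdiag d t W) = 0" "\<And>i. d$i \<notin> F"
proof -
  define n where "n = real CARD('n)"
  have "n > 0" by (simp add: n_def)
  obtain K where "K > 0" and W_bound: "\<And>i j. \<bar>W i j\<bar> \<le> K"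
    using finite_positive_upper_bound[of "\<lambda>(i, j). W i j"] by (metis case_prod_conv)
  obtain g where "g > 0" and gap: "\<And>i j. i \<noteq> j \<Longrightarrow> g \<le> \<bar>lam i - lam j\<bar>"
    using inj_min_gap[OF \<open>inj lam\<close>] by blast
  obtain c where "c > 0" and c_le: "\<And>i. c \<le> \<bar>shift_coeff W lam i\<bar>"
    using finite_positive_lower_bound[of UNIV "\<lambda>i. \<bar>shift_coeff W lam i\<bar>"] shift_nonzero by auto
  obtain e where "e > 0" and F_far: "\<And>i x. x \<in> F \<Longrightarrow> x \<noteq> lam i \<Longrightarrow> e \<le> \<bar>x - lam i\<bar>"
    using finite_set_gap_to_values[OF \<open>finite F\<close>] by blast
  define \<eta> where "\<eta> = min (g / 4) (min (e / 2) (c * g^2 / (8 * n * K^2)))"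
  have "\<eta> > 0"
    using \<open>g > 0\<close> \<open>e > 0\<close> \<open>c > 0\<close> \<open>n > 0\<close> \<open>K > 0\<close> by (simp add: \<eta>_def)
  have "\<eta> \<le> g / 2" and "\<eta> \<le> g / 4" and "\<eta> \<le> e / 2"
    and \<eta>_small: "\<eta> \<le> c * g^2 / (8 * real CARD('n) * K^2)"
    using \<open>g > 0\<close> by (auto simp: \<eta>_def n_def)
  have "0 < min (g / (8 * n * K)) (c * g^2 / (16 * n^2 * K^3))"
    using \<open>g > 0\<close> \<open>c > 0\<close> \<open>n > 0\<close> \<open>K > 0\<close> by simp
  then obtain t d where "t > 0" and "t < min (g / (8 * n * K)) (c * g^2 / (16 * n^2 * K^3))"
    and close: "\<And>j. \<bar>d$j - lam j\<bar> \<le> \<eta>"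
    and roots: "\<And>k. det (lam k *\<^sub>R mat 1 - diag_offdiag d t W) = 0"
    using exists_small_diag_offdiag_with_roots[where lam=lam, OF gap \<open>0 < \<eta>\<close> \<open>\<eta> \<le> g / 2\<close>]
    by blast
  then have "n * t * K \<le> g / 8" and t_small: "t < c * g^2 / (16 * n^2 * K^3)"
    using \<open>n > 0\<close> \<open>K > 0\<close> by (simp_all add: pos_less_divide_eq mult_ac)
  show ?thesis
  proof (rule that[OF \<open>t > 0\<close> _ roots])
    show "SSP (diag_offdiag d t W)"
    proof (rule SSP_diag_offdiag[OF _ W_bound W_diag])
      show "g / 2 \<le> \<bar>d$i - d$j\<bar>" if "i \<noteq> j" for i j
        using gap[OF that] close[of i] close[of j] \<open>\<eta> \<le> g / 4\<close> by linarith
      show "2 * real CARD('n) * t * K < g / 2"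
        using \<open>n * t * K \<le> g / 8\<close> \<open>g > 0\<close> by (simp add: n_def)
    qed (use \<open>t > 0\<close> in simp)
    show "d$i \<notin> F" for i
    proof
      assume "d$i \<in> F"
      have "real CARD('n) * t * K \<le> g / 4"
        using \<open>n * t * K \<le> g / 8\<close> \<open>g > 0\<close> by (simp add: n_def)
      moreover have "\<And>j. j \<noteq> i \<Longrightarrow> g \<le> \<bar>lam j - lam i\<bar>"
        using gap by blast
      ultimately have "d$i \<noteq> lam i"
        using diag_entry_ne_root[where lam=lam and i=i, OF roots _ \<open>g > 0\<close> close \<open>\<eta> \<le> g / 2\<close>
            W_bound W_diag \<open>K > 0\<close> \<open>c > 0\<close> c_le \<eta>_small \<open>t > 0\<close>] t_small
        by (simp add: n_def)
      with F_far[OF \<open>d$i \<in> F\<close>, of i] close[of i] \<open>\<eta> \<le> e / 2\<close> \<open>e > 0\<close> show False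
        by linarith
    qed
  qed
qed

section \<open>Weights adapted to the graph\<close>

lemma connected_graph_neighbour:
  fixes E :: "'n::finite \<Rightarrow> 'n \<Rightarrow> bool"
  assumes "connected_graph E" and "CARD('n) \<ge> 2"
  obtains j where "E i j"
proof -
  have "\<not> UNIV \<subseteq> {i}"
  proof
    assume "UNIV \<subseteq> {i}"
    then have "CARD('n) \<le> card {i}"
      by (rule card_mono[rotated]) simp
    with assms(2) show False
      by simp
  qed
  then obtain u where "u \<noteq> i"
    by auto
  have "E\<^sup>*\<^sup>* i u"
    using assms(1) by (simp add: connected_graph_def)
  then show ?thesis
  proof (cases rule: converse_rtranclpE)
    case base
    with \<open>u \<noteq> i\<close> show ?thesis
      by simp
  next
    case (step j)
    with that show ?thesis
      by blast
  qed
qed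

lemma sum_signed_distinct_powers_of_two_nonzero:
  fixes s :: "'a \<Rightarrow> real" and \<rho> :: "'a \<Rightarrow> nat"
  assumes "finite S" "S \<noteq> {}" "inj_on \<rho> S" and unit: "\<And>j. j \<in> S \<Longrightarrow> \<bar>s j\<bar> = 1"
  shows "(\<Sum>j\<in>S. s j * 2 ^ \<rho> j) \<noteq> 0"
proof -
  have "Max (\<rho> ` S) \<in> \<rho> ` S"
    using assms(1,2) by (intro Max_in) auto
  then obtain m where "m \<in> S" and "\<rho> m = Max (\<rho> ` S)"
    by auto
  then have m_max: "\<rho> j \<le> \<rho> m" if "j \<in> S" for j
    using assms(1) that by simp
  define T where "T = S - {m}"
  have "\<rho> j < \<rho> m" if "j \<in> T" for j
  proof -
    have "j \<in> S" "j \<noteq> m"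
      using that by (auto simp: T_def)
    then have "\<rho> j \<noteq> \<rho> m"
      using \<open>m \<in> S\<close> \<open>inj_on \<rho> S\<close> by (auto simp: inj_on_eq_iff)
    with m_max[OF \<open>j \<in> S\<close>] show ?thesis
      by simp
  qed
  then have "\<rho> ` T \<subseteq> {..<\<rho> m}"
    by auto
  \<comment> \<open>the largest power of two exceeds the sum of all smaller ones\<close>
  have "\<bar>\<Sum>j\<in>T. s j * 2 ^ \<rho> j\<bar> \<le> (\<Sum>j\<in>T. 2 ^ \<rho> j)"
    using sum_abs[of "\<lambda>j. s j * 2 ^ \<rho> j" T] unit by (simp add: T_def abs_mult)
  also have "\<dots> = (\<Sum>k\<in>\<rho> ` T. 2 ^ k)"
    using \<open>inj_on \<rho> S\<close> by (simp add: T_def sum.reindex inj_on_diff)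
  also have "\<dots> \<le> (\<Sum>k<\<rho> m. 2 ^ k)"
    using \<open>\<rho> ` T \<subseteq> {..<\<rho> m}\<close> by (intro sum_mono2) auto
  also have "\<dots> = 2 ^ \<rho> m - 1"
    by (simp add: sum_gp_strict)
  finally have "\<bar>\<Sum>j\<in>T. s j * 2 ^ \<rho> j\<bar> < \<bar>s m * 2 ^ \<rho> m\<bar>"
    using unit[OF \<open>m \<in> S\<close>] by (simp add: abs_mult)
  moreover have "(\<Sum>j\<in>S. s j * 2 ^ \<rho> j) = s m * 2 ^ \<rho> m + (\<Sum>j\<in>T. s j * 2 ^ \<rho> j)"
    unfolding T_def using \<open>finite S\<close> \<open>m \<in> S\<close> by (simp add: sum.remove)
  ultimately show ?thesis
    by linarith
qed

text \<open>Chosen so that W_ij W_ji / (lam_j - lam_i) = sgn (lam_j - lam_i) * 2^(rho_i + rho_j):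
  the shift coefficient becomes a signed sum of distinct powers of two.\<close>

definition pow2_weights :: "('n \<Rightarrow> 'n \<Rightarrow> bool) \<Rightarrow> ('n \<Rightarrow> real) \<Rightarrow> ('n \<Rightarrow> nat) \<Rightarrow> 'n \<Rightarrow> 'n \<Rightarrow> real" where
  "pow2_weights E lam \<rho> i j = (if E i j then sqrt (\<bar>lam i - lam j\<bar> * 2 ^ (\<rho> i + \<rho> j)) else 0)"

lemma pow2_weights_sym:
  "simple_graph E \<Longrightarrow> pow2_weights E lam \<rho> i j = pow2_weights E lam \<rho> j i"
  by (auto simp: pow2_weights_def simple_graph_def abs_minus_commute add.commute)

lemma pow2_weights_diag: "simple_graph E \<Longrightarrow> pow2_weights E lam \<rho> i i = 0"
  by (simp add: pow2_weights_def simple_graph_def)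

lemma pow2_weights_nonzero_iff:
  "simple_graph E \<Longrightarrow> inj lam \<Longrightarrow> pow2_weights E lam \<rho> i j \<noteq> 0 \<longleftrightarrow> E i j"
  by (auto simp: pow2_weights_def simple_graph_def inj_eq)

lemma shift_coeff_pow2_weights:
  assumes "simple_graph E" and "inj lam"
  shows "shift_coeff (pow2_weights E lam \<rho>) lam i
           = 2 ^ \<rho> i * (\<Sum>j | E i j. sgn (lam j - lam i) * 2 ^ \<rho> j)"
proof -
  let ?W = "pow2_weights E lam \<rho>"
  have "?W i j * ?W j i / (lam j - lam i)
      = (if E i j then 2 ^ \<rho> i * (sgn (lam j - lam i) * 2 ^ \<rho> j) else 0)" for j
  proof (cases "E i j")
    case True
    then have "lam j \<noteq> lam i"
      using assms by (auto simp: simple_graph_def inj_eq)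
    have "?W i j * ?W j i = ?W i j * ?W i j"
      by (simp only: pow2_weights_sym[OF assms(1), where i=j and j=i])
    also have "\<dots> = \<bar>lam j - lam i\<bar> * 2 ^ (\<rho> i + \<rho> j)"
      using True by (simp add: pow2_weights_def abs_minus_commute)
    finally have "?W i j * ?W j i = \<bar>lam j - lam i\<bar> * 2 ^ (\<rho> i + \<rho> j)" .
    then show ?thesis
      using True \<open>lam j \<noteq> lam i\<close> by (simp add: abs_sgn power_add)
  qed (simp add: pow2_weights_def)
  then show ?thesis
    by (simp add: shift_coeff_def sum.If_cases sum_distrib_left)
qed

lemma shift_coeff_pow2_weights_nonzero:
  assumes "simple_graph E" and "inj lam" and "inj \<rho>" and "E i j"
  shows "shift_coeff (pow2_weights E lam \<rho>) lam i \<noteq> 0"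
proof -
  have "(\<Sum>j | E i j. sgn (lam j - lam i) * 2 ^ \<rho> j) \<noteq> 0"
  proof (rule sum_signed_distinct_powers_of_two_nonzero)
    show "{j. E i j} \<noteq> {}"
      using \<open>E i j\<close> by auto
    show "inj_on \<rho> {j. E i j}"
      using \<open>inj \<rho>\<close> by (rule inj_on_subset) simp
    show "\<bar>sgn (lam k - lam i)\<bar> = 1" if "k \<in> {j. E i j}" for k
      using that assms(1,2) by (auto simp: simple_graph_def inj_eq abs_sgn_eq)
  qed simp
  then show ?thesis
    by (simp add: shift_coeff_pow2_weights[OF assms(1,2)])
qed

theorem lemma2p3:
  fixes \<sigma> :: "real set" and F :: "real set" and E :: "'n::finite \<Rightarrow> 'n \<Rightarrow> bool"
  assumes "CARD('n) \<ge> 2"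
    and "finite \<sigma>" and "card \<sigma> = CARD('n)"
    and "finite F"
    and "simple_graph E" and "connected_graph E"
  shows "\<exists>A \<in> S_graph E. SSP A \<and> spec_is A (mset_set \<sigma>) \<and> (\<forall>i. A$i$i \<notin> F)"
proof -
  obtain lam where bij: "bij_betw lam (UNIV::'n set) \<sigma>"
    using finite_same_card_bij[of "UNIV::'n set" \<sigma>] assms(2,3) by auto
  then have "inj lam"
    by (rule bij_betw_imp_inj_on)
  obtain \<rho> :: "'n \<Rightarrow> nat" where "inj \<rho>"
    using ex_bij_betw_finite_nat[of "UNIV::'n set"] bij_betw_imp_inj_on by blast
  let ?W = "pow2_weights E lam \<rho>"
  have "shift_coeff ?W lam i \<noteq> 0" for i
    using connected_graph_neighbour[OF assms(6,1)]
      shift_coeff_pow2_weights_nonzero[OF assms(5) \<open>inj lam\<close> \<open>inj \<rho>\<close>] by metis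
  then obtain d t where "t > 0" "SSP (diag_offdiag d t ?W)" "\<And>i. d$i \<notin> F"
    and roots: "\<And>k. det (lam k *\<^sub>R mat 1 - diag_offdiag d t ?W) = 0"
    using exists_SSP_diag_offdiag[where W="?W", OF \<open>inj lam\<close> assms(4) pow2_weights_diag[OF assms(5)]] by metis
  moreover have "diag_offdiag d t ?W \<in> S_graph E"
    using pow2_weights_sym[OF assms(5)] pow2_weights_nonzero_iff[OF assms(5) \<open>inj lam\<close>] \<open>t > 0\<close>
    by (intro diag_offdiag_in_S_graph) auto
  moreover have "spec_is (diag_offdiag d t ?W) (mset_set \<sigma>)"
    by (rule spec_is_if_roots[OF bij roots])
  ultimately show ?thesis
    by (auto simp: diag_offdiag_def)
qed

end
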